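(* Let $M \subseteq \mathrm{Inj}(\Omega)$ be a normal submonoid. Then $M \cap \mathrm{Sym}(\Omega)$ is a normal subgroup of $\mathrm{Sym}(\Omega)$ (in particular it is closed under inverses).
   Context: $\Omega$ is a countably infinite set; $\mathrm{Inj}(\Omega)$ is the monoid of all injective maps $\Omega\to\Omega$ under composition and $\mathrm{Sym}(\Omega)$ the group of all permutations of $\Omega$. A subset of $\mathrm{Inj}(\Omega)$ is normal if it is closed under $f\mapsto afa^{-1}$ for all $a\in\mathrm{Sym}(\Omega)$. *)

theory Defs
  imports Main "HOL-Library.Countable_Set" "HOL-Algebra.Bij" "HOL-Algebra.Coset"
begin

definition Inj_set :: "('a \<Rightarrow> 'a) set" where
  "Inj_set = {f. inj f}"

definition Sym_set :: "('a \<Rightarrow> 'a) set" where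
  "Sym_set = {f. bij f}"

definition inj_submonoid :: "('a \<Rightarrow> 'a) set \<Rightarrow> bool" where
  "inj_submonoid M \<longleftrightarrow> M \<subseteq> Inj_set \<and> id \<in> M \<and> (\<forall>f\<in>M. \<forall>g\<in>M. f \<circ> g \<in> M)"

definition normal_set :: "('a \<Rightarrow> 'a) set \<Rightarrow> bool" where
  "normal_set M \<longleftrightarrow> (\<forall>a\<in>Sym_set. \<forall>f\<in>M. a \<circ> f \<circ> Hilbert_Choice.inv a \<in> M)"

end

theory Submission
  imports Defs
begin

text \<open>
  The only non-trivial point is closure of the group of units
  \<open>M \<inter> Sym(\<Omega>)\<close> under inverses.  It follows from the classical fact that every
  permutation f is conjugate to its inverse: \<open>a \<circ> f \<circ> a\<inverse> = f\<inverse>\<close> for some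
  permutation a, so normality of M puts \<open>f\<inverse>\<close> into M.

  To find a, view the integer powers of f as an action of \<int> and choose a
  base point r in every orbit; the point \<open>f\<^sup>n r\<close> is sent to \<open>f\<^sup>-\<^sup>n r\<close>.  This
  "reflection" is an involution reversing the action.
\<close>

locale int_action =
  fixes P :: "int \<Rightarrow> 'a \<Rightarrow> 'a"
  assumes act_add: "P (m + n) y = P m (P n y)"
    and act_zero: "P 0 y = y"
begin

lemma act_cancel: "P (-n) (P n y) = y"
  by (metis act_add act_zero add.left_inverse)

definition orbit :: "'a \<Rightarrow> 'a set" where
  "orbit y = range (\<lambda>n. P n y)"

definition base :: "'a \<Rightarrow> 'a" where
  "base y = (SOME r. r \<in> orbit y)"

lemma orbit_self: "y \<in> orbit y"
  unfolding orbit_def using act_zero by (metis rangeI)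

lemma orbit_eq:
  assumes "z \<in> orbit y"
  shows "orbit z = orbit y"
proof -
  obtain n where z: "z = P n y" using assms unfolding orbit_def by auto
  have y: "y = P (-n) z" using z act_cancel by simp
  have "P m z \<in> orbit y" for m unfolding orbit_def z by (metis act_add rangeI)
  moreover have "P m y \<in> orbit z" for m unfolding orbit_def y by (metis act_add rangeI)
  ultimately show ?thesis unfolding orbit_def by blast
qed

lemma base_in_orbit: "base y \<in> orbit y"
  unfolding base_def using orbit_self by (rule someI)

lemma base_eq: "z \<in> orbit y \<Longrightarrow> base z = base y"
  unfolding base_def using orbit_eq by simp

lemma orbit_base: "\<exists>n. y = P n (base y)"
proof -
  obtain n where "base y = P n y" using base_in_orbit[of y] unfolding orbit_def by auto
  then have "y = P (-n) (base y)" using act_cancel by simp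
  then show ?thesis by blast
qed

text \<open>Exponents of a point relative to a base point are determined only up to
  the stabiliser, but their negatives give the same point: this makes the
  reflection below well defined.\<close>
lemma act_neg_cong:
  assumes "P n r = P m r"
  shows "P (-n) r = P (-m) r"
proof -
  have "P (-n) r = P (-n-m) (P m r)" using act_add[of "-n-m" m r] by simp
  also have "\<dots> = P (-n-m) (P n r)" using assms by simp
  also have "\<dots> = P (-m) r" using act_add[of "-n-m" n r] by simp
  finally show ?thesis .
qed

text \<open>The reflection of each orbit in its base point: \<open>P n r \<mapsto> P (-n) r\<close>.\<close>
definition reflect :: "'a \<Rightarrow> 'a" where
  "reflect y = P (- (SOME n. y = P n (base y))) (base y)"

lemma reflect_eq:
  assumes "y = P n (base y)"
  shows "reflect y = P (-n) (base y)"
proof -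
  have "y = P (SOME n. y = P n (base y)) (base y)"
    using orbit_base by (rule someI_ex)
  with assms show ?thesis unfolding reflect_def by (metis act_neg_cong)
qed

lemma base_act: "base (P n y) = base y"
  by (rule base_eq) (auto simp: orbit_def)

lemma reflect_act:
  assumes "y = P n (base y)"
  shows "reflect (P m y) = P (-m) (reflect y)"
proof -
  have "P m y = P (m + n) (base (P m y))" using assms act_add base_act by metis
  then have "reflect (P m y) = P (-m + -n) (base y)"
    using reflect_eq base_act by (metis minus_add_distrib add.commute)
  also have "\<dots> = P (-m) (reflect y)" using act_add[of "-m" "-n"] reflect_eq[OF assms] by simp
  finally show ?thesis .
qed

lemma reflect_involution: "reflect (reflect y) = y"
proof -
  obtain n where n: "y = P n (base y)" using orbit_base by blast
  have refl: "reflect y = P (-n) (base y)" using reflect_eq[OF n] .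
  then have "base (reflect y) = base y" by (metis base_act n)
  with refl have "reflect (reflect y) = P (- (-n)) (base y)" by (metis reflect_eq)
  with n show ?thesis by simp
qed

lemma reflect_reverses: "reflect (P 1 y) = P (-1) (reflect y)"
  using orbit_base reflect_act by blast

end

lemma BijGroup_UNIV:
  shows "carrier (BijGroup UNIV) = Sym_set"
    and "\<one>\<^bsub>BijGroup UNIV\<^esub> = id"
    and "\<lbrakk>g \<in> Sym_set; h \<in> Sym_set\<rbrakk> \<Longrightarrow> g \<otimes>\<^bsub>BijGroup UNIV\<^esub> h = g \<circ> h"
    and "g \<in> Sym_set \<Longrightarrow> inv\<^bsub>BijGroup UNIV\<^esub> g = Hilbert_Choice.inv g"
  using inv_BijGroup[of g UNIV]
  by (auto simp: BijGroup_def Bij_def Sym_set_def compose_def)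

lemma int_action_powers:
  assumes "bij f"
  shows "int_action (\<lambda>n. f [^]\<^bsub>BijGroup UNIV\<^esub> (n::int))"
proof -
  interpret G: group "BijGroup UNIV" by (rule group_BijGroup)
  have f: "f \<in> carrier (BijGroup UNIV)" using assms by (simp add: BijGroup_UNIV Sym_set_def)
  show ?thesis
  proof
    fix m n :: int and y
    show "(f [^]\<^bsub>BijGroup UNIV\<^esub> (m + n)) y
        = (f [^]\<^bsub>BijGroup UNIV\<^esub> m) ((f [^]\<^bsub>BijGroup UNIV\<^esub> n) y)"
      using G.int_pow_mult[OF f, of m n] G.int_pow_closed[OF f]
      by (simp add: BijGroup_UNIV)
  qed (simp add: BijGroup_UNIV)
qed

text \<open>Every permutation is conjugate to its inverse, via the reflection of the
  \<int>-action given by its powers.\<close>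
lemma bij_conjugate_to_inv:
  assumes "bij f"
  shows "\<exists>a. bij a \<and> a \<circ> f \<circ> Hilbert_Choice.inv a = Hilbert_Choice.inv f"
proof -
  interpret G: group "BijGroup UNIV" by (rule group_BijGroup)
  define P where "P n = f [^]\<^bsub>BijGroup UNIV\<^esub> (n::int)" for n
  interpret int_action P unfolding P_def using assms by (rule int_action_powers)
  have f: "f \<in> carrier (BijGroup UNIV)" using assms by (simp add: BijGroup_UNIV Sym_set_def)
  have P1: "P 1 = f" unfolding P_def using f by simp
  have Pm1: "P (-1) = Hilbert_Choice.inv f"
    unfolding P_def using G.int_pow_neg[OF f, of 1] f assms
    by (simp add: BijGroup_UNIV Sym_set_def)
  have invol: "reflect \<circ> reflect = id" using reflect_involution by auto
  then have "bij reflect" and "Hilbert_Choice.inv reflect = reflect"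
    by (auto simp: o_bij inv_unique_comp)
  moreover have "reflect \<circ> f \<circ> reflect = Hilbert_Choice.inv f"
    using reflect_reverses reflect_involution by (auto simp: P1 Pm1)
  ultimately show ?thesis by metis
qed

lemma normal_set_inv_closed:
  assumes "normal_set M" and "f \<in> M" and "bij f"
  shows "Hilbert_Choice.inv f \<in> M"
  using bij_conjugate_to_inv[OF assms(3)] assms(1,2)
  unfolding normal_set_def Sym_set_def by (metis mem_Collect_eq)

lemma units_subgroup:
  assumes "inj_submonoid M" and "normal_set M"
  shows "subgroup (M \<inter> Sym_set) (BijGroup UNIV)"
proof
  show "M \<inter> Sym_set \<subseteq> carrier (BijGroup UNIV)" by (simp add: BijGroup_UNIV)
  show "\<one>\<^bsub>BijGroup UNIV\<^esub> \<in> M \<inter> Sym_set"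
    using assms(1) by (simp add: BijGroup_UNIV inj_submonoid_def Sym_set_def)
  show "x \<otimes>\<^bsub>BijGroup UNIV\<^esub> y \<in> M \<inter> Sym_set" if "x \<in> M \<inter> Sym_set" "y \<in> M \<inter> Sym_set" for x y
    using that assms(1) by (auto simp: BijGroup_UNIV inj_submonoid_def Sym_set_def bij_comp)
  show "inv\<^bsub>BijGroup UNIV\<^esub> x \<in> M \<inter> Sym_set" if "x \<in> M \<inter> Sym_set" for x
    using that normal_set_inv_closed[OF assms(2)]
    by (auto simp: BijGroup_UNIV Sym_set_def bij_imp_bij_inv)
qed

theorem mainTheorem2:
  fixes M :: "('a \<Rightarrow> 'a) set"
  assumes "countable (UNIV :: 'a set)" and "infinite (UNIV :: 'a set)"
    and "inj_submonoid M" and "normal_set M"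
  shows "M \<inter> Sym_set \<lhd> BijGroup (UNIV :: 'a set)"
proof -
  interpret G: group "BijGroup (UNIV :: 'a set)" by (rule group_BijGroup)
  have conj: "x \<otimes>\<^bsub>BijGroup UNIV\<^esub> h \<otimes>\<^bsub>BijGroup UNIV\<^esub> inv\<^bsub>BijGroup UNIV\<^esub> x \<in> M \<inter> Sym_set"
    if x: "x \<in> Sym_set" and h: "h \<in> M \<inter> Sym_set" for x h
  proof -
    have "x \<circ> h \<in> Sym_set" and "Hilbert_Choice.inv x \<in> Sym_set"
      using x h by (auto simp: Sym_set_def bij_comp bij_imp_bij_inv)
    then have "x \<otimes>\<^bsub>BijGroup UNIV\<^esub> h \<otimes>\<^bsub>BijGroup UNIV\<^esub> inv\<^bsub>BijGroup UNIV\<^esub> x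
        = x \<circ> h \<circ> Hilbert_Choice.inv x"
      using x h by (simp add: BijGroup_UNIV)
    moreover have "x \<circ> h \<circ> Hilbert_Choice.inv x \<in> M"
      using assms(4) x h unfolding normal_set_def by auto
    ultimately show ?thesis using \<open>x \<circ> h \<in> Sym_set\<close> \<open>Hilbert_Choice.inv x \<in> Sym_set\<close>
      by (simp add: Sym_set_def bij_comp)
  qed
  show ?thesis
    unfolding G.normal_inv_iff
    using units_subgroup[OF assms(3,4)] conj by (simp add: BijGroup_UNIV)
qed

end
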